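(* Let $X$ be a space possessing a binary normal closed subbase $\mathcal S$. Then every $\mathcal S$-convex $\mathcal S$-open continuous surjection $f\colon X\to Y$ is invertible: for every space $Z$ and every continuous map $g\colon Z\to Y$ there exists a continuous map $h\colon Z\to X$ with $f\circ h=g$.
   Context: All spaces are Tychonoff and maps continuous. A family $\mathcal S$ of closed subsets of $X$ is a closed subbase if every closed set is an intersection of finite unions of members of $\mathcal S$. A family is linked if any two members intersect; $\mathcal S$ is binary if every linked subfamily has nonempty intersection. $\mathcal S$ is normal if for every disjoint $S_0,S_1\in\mathcal S$ there exist $T_0,T_1\in\mathcal S$ with $S_0\cap T_1=\varnothing=T_0\cap S_1$ and $T_0\cup T_1=X$. For $B\subset X$, $I_{\mathcal S}(B)=\bigcap\{S\in\mathcal S:B\subset S\}$; $B$ is $\mathcal S$-convex if $I_{\mathcal S}(\{x,y\})\subset B$ for all $x,y\in B$. A map $f\colon X\to Y$ is $\mathcal S$-convex if all its fibers $f^{-1}(y)$ are $\mathcal S$-convex, and $\mathcal S$-open if $f(X\setminus S)$ is open in $Y$ for every $S\in\mathcal S$. *)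

theory Defs
  imports "HOL-Analysis.Analysis"
begin

definition Tychonoff_space :: "'a topology \<Rightarrow> bool" where
  "Tychonoff_space X \<longleftrightarrow> completely_regular_space X \<and> t1_space X"

definition closed_subbase :: "'a topology \<Rightarrow> 'a set set \<Rightarrow> bool" where
  "closed_subbase X \<S> \<longleftrightarrow> (\<forall>S\<in>\<S>. closedin X S) \<and>
     (\<forall>C. closedin X C \<longrightarrow>
        (\<exists>\<F>. C = topspace X \<inter> \<Inter>\<F> \<and>
              (\<forall>A\<in>\<F>. \<exists>\<G>. finite \<G> \<and> \<G> \<subseteq> \<S> \<and> A = \<Union>\<G>)))"

definition linked :: "'a set set \<Rightarrow> bool" where
  "linked \<L> \<longleftrightarrow> (\<forall>A\<in>\<L>. \<forall>B\<in>\<L>. A \<inter> B \<noteq> {})"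

definition binary_family :: "'a set set \<Rightarrow> bool" where
  "binary_family \<S> \<longleftrightarrow> (\<forall>\<L>. \<L> \<subseteq> \<S> \<and> \<L> \<noteq> {} \<and> linked \<L> \<longrightarrow> \<Inter>\<L> \<noteq> {})"

definition normal_family :: "'a topology \<Rightarrow> 'a set set \<Rightarrow> bool" where
  "normal_family X \<S> \<longleftrightarrow> (\<forall>S0\<in>\<S>. \<forall>S1\<in>\<S>. S0 \<inter> S1 = {} \<longrightarrow>
     (\<exists>T0\<in>\<S>. \<exists>T1\<in>\<S>. S0 \<inter> T1 = {} \<and> T0 \<inter> S1 = {} \<and> T0 \<union> T1 = topspace X))"

definition S_hull :: "'a topology \<Rightarrow> 'a set set \<Rightarrow> 'a set \<Rightarrow> 'a set" where
  "S_hull X \<S> B = topspace X \<inter> \<Inter>{S\<in>\<S>. B \<subseteq> S}"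

definition S_convex :: "'a topology \<Rightarrow> 'a set set \<Rightarrow> 'a set \<Rightarrow> bool" where
  "S_convex X \<S> B \<longleftrightarrow> (\<forall>x\<in>B. \<forall>y\<in>B. S_hull X \<S> {x, y} \<subseteq> B)"

definition S_convex_map :: "'a topology \<Rightarrow> 'a set set \<Rightarrow> 'b topology \<Rightarrow> ('a \<Rightarrow> 'b) \<Rightarrow> bool" where
  "S_convex_map X \<S> Y f \<longleftrightarrow>
     (\<forall>y\<in>topspace Y. S_convex X \<S> {x\<in>topspace X. f x = y})"

definition S_open_map :: "'a topology \<Rightarrow> 'a set set \<Rightarrow> 'b topology \<Rightarrow> ('a \<Rightarrow> 'b) \<Rightarrow> bool" where
  "S_open_map X \<S> Y f \<longleftrightarrow> (\<forall>S\<in>\<S>. openin Y (f ` (topspace X - S)))"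

end

theory Submission
  imports Defs
begin

(* Binarity of the closed subbase makes X compact (Alexander's subbase lemma) and gives a
   Helly-type property: a finite linked subfamily whose members all meet a nonempty S-convex set F
   has a common point in F.  Fix a base point a.  In each fibre F = f^-1(y) the members of S that
   contain a and meet F, together with F, then have the finite intersection property, so by
   compactness there is a point of F lying in all of them; normality of S makes it unique.  This
   "gate" of a in the fibre is a section of f, continuous because the preimage of every subbasic
   closed set is closed: near a point where the gate avoids S, S-openness of f or closedness of f
   (X compact, Y Hausdorff) keeps it outside S.  Composing with g gives the lift. *)

lemma closedin_closed_subbase: "closed_subbase X \<S> \<Longrightarrow> S \<in> \<S> \<Longrightarrow> closedin X S"
  unfolding closed_subbase_def by blast

lemma closed_subbase_subset: "closed_subbase X \<S> \<Longrightarrow> S \<in> \<S> \<Longrightarrow> S \<subseteq> topspace X"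
  using closedin_closed_subbase closedin_subset by blast

lemma closed_subbase_representation:
  assumes "closed_subbase X \<S>" "closedin X C"
  obtains \<F> where "C = topspace X \<inter> \<Inter>\<F>"
    "\<And>A. A \<in> \<F> \<Longrightarrow> \<exists>\<G>. finite \<G> \<and> \<G> \<subseteq> \<S> \<and> A = \<Union>\<G>"
  using assms unfolding closed_subbase_def by meson

lemma closed_subbase_complements_generate:
  assumes subbase: "closed_subbase X \<S>"
  defines "\<B> \<equiv> insert (topspace X) ((\<lambda>S. topspace X - S) ` \<S>)"
  shows "topology (arbitrary union_of
           (finite intersection_of (\<lambda>V. V \<in> \<B>) relative_to topspace X)) = X"
  unfolding topology_eq
proof (intro allI iffI)
  fix V
  assume "openin (topology (arbitrary union_of
            (finite intersection_of (\<lambda>V. V \<in> \<B>) relative_to topspace X))) V"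
  moreover have "\<And>V. V \<in> \<B> \<Longrightarrow> openin X V"
    using closedin_closed_subbase[OF subbase] unfolding \<B>_def by auto
  ultimately show "openin X V"
    by (rule minimal_topology_subbase[OF _ openin_topspace, rotated])
next
  fix V assume V: "openin X V"
  have "closedin X (topspace X - V)"
    by (rule closedin_diff[OF closedin_topspace V])
  then obtain \<F> where \<F>: "topspace X - V = topspace X \<inter> \<Inter>\<F>"
    and finite_unions: "\<And>A. A \<in> \<F> \<Longrightarrow> \<exists>\<G>. finite \<G> \<and> \<G> \<subseteq> \<S> \<and> A = \<Union>\<G>"
    using closed_subbase_representation[OF subbase] by blast
  have basic: "(finite intersection_of (\<lambda>V. V \<in> \<B>) relative_to topspace X) (topspace X - A)"
    if "A \<in> \<F>" for A
  proof -
    obtain \<G> where \<G>: "finite \<G>" "\<G> \<subseteq> \<S>" "A = \<Union>\<G>"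
      using finite_unions \<open>A \<in> \<F>\<close> by blast
    have "(finite intersection_of (\<lambda>V. V \<in> \<B>)) (\<Inter>((\<lambda>S. topspace X - S) ` \<G>))"
      unfolding intersection_of_def
      by (rule exI[of _ "(\<lambda>S. topspace X - S) ` \<G>"]) (use \<G> in \<open>auto simp: \<B>_def\<close>)
    moreover have "topspace X \<inter> \<Inter>((\<lambda>S. topspace X - S) ` \<G>) = topspace X - A"
      using \<G>(3) by auto
    ultimately show ?thesis
      unfolding relative_to_def by blast
  qed
  have "V = \<Union>((\<lambda>A. topspace X - A) ` \<F>)"
    using \<F> openin_subset[OF V] by blast
  then have "(arbitrary union_of
               (finite intersection_of (\<lambda>V. V \<in> \<B>) relative_to topspace X)) V"
    unfolding union_of_def arbitrary_def
    by (intro exI[of _ "(\<lambda>A. topspace X - A) ` \<F>"]) (use basic in auto)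
  then show "openin (topology (arbitrary union_of
               (finite intersection_of (\<lambda>V. V \<in> \<B>) relative_to topspace X))) V"
    by (simp only: openin_subbase)
qed

lemma compact_space_binary_closed_subbase:
  assumes subbase: "closed_subbase X \<S>" and binary: "binary_family \<S>"
  shows "compact_space X"
proof -
  let ?U = "topspace X" and ?\<B> = "insert (topspace X) ((\<lambda>S. topspace X - S) ` \<S>)"
  show ?thesis
  proof (rule Alexander_subbase_alt[OF _ _ closed_subbase_complements_generate[OF subbase]])
    fix \<C> assume \<C>: "\<C> \<subseteq> ?\<B>" "?U \<subseteq> \<Union>\<C>"
    define \<L> where "\<L> = {S \<in> \<S>. ?U - S \<in> \<C>}"
    show "\<exists>\<C>'. finite \<C>' \<and> \<C>' \<subseteq> \<C> \<and> ?U \<subseteq> \<Union>\<C>'"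
    proof (cases "?U \<in> \<C> \<or> \<not> linked \<L>")
      case True
      then show ?thesis
      proof
        assume "?U \<in> \<C>"
        then show ?thesis by (intro exI[of _ "{?U}"]) auto
      next
        assume "\<not> linked \<L>"
        then obtain A B where "A \<in> \<L>" "B \<in> \<L>" "A \<inter> B = {}"
          unfolding linked_def by blast
        then show ?thesis
          unfolding \<L>_def by (intro exI[of _ "{?U - A, ?U - B}"]) auto
      qed
    next
      case False
      then have \<C>_complements: "\<And>V. V \<in> \<C> \<Longrightarrow> \<exists>S\<in>\<L>. V = ?U - S"
        using \<C>(1) unfolding \<L>_def by auto
      \<comment> \<open>the complements of a linked subfamily cannot cover a nonempty space\<close>
      have "?U = {}"
      proof (rule ccontr)
        assume "?U \<noteq> {}"
        then obtain S where "S \<in> \<L>"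
          using \<C>(2) \<C>_complements by blast
        moreover have "linked \<L>" "\<L> \<subseteq> \<S>"
          using False unfolding \<L>_def by auto
        ultimately obtain w where w: "w \<in> \<Inter>\<L>"
          using binary unfolding binary_family_def by blast
        then have "w \<in> ?U"
          using \<open>S \<in> \<L>\<close> closed_subbase_subset[OF subbase]
          unfolding \<L>_def by blast
        then show False
          using w \<C> \<C>_complements by blast
      qed
      then show ?thesis by blast
    qed
  qed auto
qed

lemma continuous_map_closed_subbase:
  assumes subbase: "closed_subbase X \<S>" and h: "h \<in> topspace Y \<rightarrow> topspace X"
    and closed_preimage: "\<And>S. S \<in> \<S> \<Longrightarrow> closedin Y {y \<in> topspace Y. h y \<in> S}"
  shows "continuous_map Y X h"
  unfolding continuous_map_closedin
proof (intro conjI allI impI h)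
  fix C assume "closedin X C"
  then obtain \<F> where \<F>: "C = topspace X \<inter> \<Inter>\<F>"
    and finite_unions: "\<And>A. A \<in> \<F> \<Longrightarrow> \<exists>\<G>. finite \<G> \<and> \<G> \<subseteq> \<S> \<and> A = \<Union>\<G>"
    using closed_subbase_representation[OF subbase] by blast
  let ?pre = "\<lambda>A. {y \<in> topspace Y. h y \<in> A}"
  have pre_closed: "closedin Y (?pre A)" if "A \<in> \<F>" for A
  proof -
    obtain \<G> where \<G>: "finite \<G>" "\<G> \<subseteq> \<S>" "A = \<Union>\<G>"
      using finite_unions \<open>A \<in> \<F>\<close> by blast
    have "closedin Y (\<Union>(?pre ` \<G>))"
      using \<G>(1,2) closed_preimage by (intro closedin_Union) auto
    moreover have "?pre A = \<Union>(?pre ` \<G>)"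
      using \<G>(3) by auto
    ultimately show ?thesis
      by simp
  qed
  have "?pre C = \<Inter>(insert (topspace Y) (?pre ` \<F>))"
  proof (intro equalityI subsetI)
    fix y assume "y \<in> ?pre C"
    then show "y \<in> \<Inter>(insert (topspace Y) (?pre ` \<F>))"
      using \<F> by blast
  next
    fix y assume y: "y \<in> \<Inter>(insert (topspace Y) (?pre ` \<F>))"
    then have "h y \<in> topspace X"
      using h by blast
    then show "y \<in> ?pre C"
      using y \<F> by blast
  qed
  moreover have "closedin Y (\<Inter>(insert (topspace Y) (?pre ` \<F>)))"
    using pre_closed by (intro closedin_Inter) auto
  ultimately show "closedin Y (?pre C)"
    by simp
qed

lemma closed_subbase_separates_points:
  assumes subbase: "closed_subbase X \<S>" and "t1_space X"
    and p: "p \<in> topspace X" and q: "q \<in> topspace X" and "p \<noteq> q"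
  shows "\<exists>T\<in>\<S>. q \<in> T \<and> p \<notin> T"
proof -
  have "closedin X {q}"
    using t1_space_closedin_singleton[THEN iffD1, OF \<open>t1_space X\<close>] q by blast
  then obtain \<F> where \<F>: "{q} = topspace X \<inter> \<Inter>\<F>"
    and finite_unions: "\<And>A. A \<in> \<F> \<Longrightarrow> \<exists>\<G>. finite \<G> \<and> \<G> \<subseteq> \<S> \<and> A = \<Union>\<G>"
    using closed_subbase_representation[OF subbase] by blast
  obtain A where A: "A \<in> \<F>" "p \<notin> A" "q \<in> A"
    using \<F> p \<open>p \<noteq> q\<close> by blast
  then obtain \<G> where "\<G> \<subseteq> \<S>" "A = \<Union>\<G>"
    using finite_unions by blast
  then show ?thesis
    using A by blast
qed

lemma binary_closed_subbase_separates_point_member: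
  assumes subbase: "closed_subbase X \<S>" and binary: "binary_family \<S>" and t1: "t1_space X"
    and p: "p \<in> topspace X" and T: "T \<in> \<S>" "p \<notin> T" "T \<noteq> {}"
  shows "\<exists>S\<in>\<S>. p \<in> S \<and> S \<inter> T = {}"
proof (rule ccontr)
  assume "\<not> ?thesis"
  then have meets_T: "\<And>S. S \<in> \<S> \<Longrightarrow> p \<in> S \<Longrightarrow> S \<inter> T \<noteq> {}"
    by blast
  define \<M> where "\<M> = insert T {S \<in> \<S>. p \<in> S}"
  have "linked \<M>"
    unfolding linked_def \<M>_def using meets_T \<open>T \<noteq> {}\<close> by blast
  moreover have "\<M> \<subseteq> \<S>" "\<M> \<noteq> {}"
    unfolding \<M>_def using T by auto
  ultimately obtain w where w: "w \<in> \<Inter>\<M>"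
    using binary unfolding binary_family_def by blast
  then have "w \<in> T"
    unfolding \<M>_def by blast
  moreover have "w \<in> topspace X"
    using \<open>w \<in> T\<close> closed_subbase_subset[OF subbase T(1)] by blast
  ultimately obtain S where "S \<in> \<S>" "p \<in> S" "w \<notin> S"
    using closed_subbase_separates_points[OF subbase t1, of w p] p T(2) by blast
  then show False
    using w unfolding \<M>_def by blast
qed

lemma binary_normal_closed_subbase_screen:
  assumes subbase: "closed_subbase X \<S>" and binary: "binary_family \<S>"
    and normal: "normal_family X \<S>" and t1: "t1_space X"
    and p: "p \<in> topspace X" and T: "T \<in> \<S>" "p \<notin> T" "T \<noteq> {}"
  shows "\<exists>T0\<in>\<S>. \<exists>T1\<in>\<S>. p \<notin> T1 \<and> T0 \<inter> T = {} \<and> T0 \<union> T1 = topspace X"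
proof -
  obtain S where S: "S \<in> \<S>" "p \<in> S" "S \<inter> T = {}"
    using binary_closed_subbase_separates_point_member[OF subbase binary t1 p T] by blast
  then obtain T0 T1 where "T0 \<in> \<S>" "T1 \<in> \<S>" "S \<inter> T1 = {}" "T0 \<inter> T = {}"
      "T0 \<union> T1 = topspace X"
    using normal T(1) unfolding normal_family_def by metis
  moreover have "p \<notin> T1"
    using S(2) \<open>S \<inter> T1 = {}\<close> by blast
  ultimately show ?thesis
    by blast
qed

lemma S_convex_Int_Inter_linked_nonempty:
  assumes binary: "binary_family \<S>" and members: "\<And>S. S \<in> \<S> \<Longrightarrow> S \<subseteq> topspace X"
    and F: "F \<noteq> {}" "S_convex X \<S> F"
  shows "\<lbrakk>finite \<K>; \<K> \<subseteq> \<S>; linked \<K>; \<And>K. K \<in> \<K> \<Longrightarrow> K \<inter> F \<noteq> {}\<rbrakk> \<Longrightarrow> F \<inter> \<Inter>\<K> \<noteq> {}"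
proof (induction \<K> rule: finite_psubset_induct)
  case (psubset \<K>)
  show ?case
  proof (cases "\<exists>K1\<in>\<K>. \<exists>K2\<in>\<K>. K1 \<noteq> K2")
    case False
    then have "\<K> = {} \<or> (\<exists>K. \<K> = {K})"
      by blast
    then show ?thesis
      using F(1) psubset.prems(3) by auto
  next
    case True
    then obtain K1 K2 where K12: "K1 \<in> \<K>" "K2 \<in> \<K>" "K1 \<noteq> K2"
      by blast
    have drop_one: "F \<inter> \<Inter>(\<K> - {K}) \<noteq> {}" if "K \<in> \<K>" for K
      by (rule psubset.IH) (use that psubset.prems in \<open>auto simp: linked_def\<close>)
    obtain q where q: "q \<in> F" "q \<in> \<Inter>(\<K> - {K1})"
      using drop_one[OF K12(1)] by blast
    obtain p where p: "p \<in> F" "p \<in> \<Inter>(\<K> - {K2})"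
      using drop_one[OF K12(2)] by blast
    \<comment> \<open>every member of \<K> contains p or q, so adding all members through both p and q keeps it linked\<close>
    define \<M> where "\<M> = \<K> \<union> {T \<in> \<S>. p \<in> T \<and> q \<in> T}"
    have "\<forall>K\<in>\<K>. p \<in> K \<or> q \<in> K"
      using p q K12(3) by blast
    then have "linked \<M>"
      using psubset.prems(2) unfolding linked_def \<M>_def by blast
    moreover have "\<M> \<subseteq> \<S>" "\<M> \<noteq> {}"
      using psubset.prems(1) K12(1) unfolding \<M>_def by auto
    ultimately obtain z where z: "z \<in> \<Inter>\<M>"
      using binary unfolding binary_family_def by blast
    have "z \<in> topspace X"
      using z K12(1) members psubset.prems(1) unfolding \<M>_def by blast
    then have "z \<in> S_hull X \<S> {p, q}"
      using z unfolding S_hull_def \<M>_def by auto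
    then have "z \<in> F"
      using F(2) p(1) q(1) unfolding S_convex_def by blast
    moreover have "z \<in> \<Inter>\<K>"
      using z unfolding \<M>_def by blast
    ultimately show ?thesis
      by blast
  qed
qed


text \<open>For closed \<S>-convex F this set is a single point, the gate of a in F.\<close>

definition gates :: "'a set set \<Rightarrow> 'a \<Rightarrow> 'a set \<Rightarrow> 'a set" where
  "gates \<S> a F = {p \<in> F. \<forall>S\<in>\<S>. a \<in> S \<longrightarrow> S \<inter> F \<noteq> {} \<longrightarrow> p \<in> S}"

definition gate :: "'a set set \<Rightarrow> 'a \<Rightarrow> 'a set \<Rightarrow> 'a" where
  "gate \<S> a F = the_elem (gates \<S> a F)"

lemma gate_in_gates:
  assumes "gates \<S> a F \<noteq> {}" and "\<And>p q. p \<in> gates \<S> a F \<Longrightarrow> q \<in> gates \<S> a F \<Longrightarrow> p = q"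
  shows "gate \<S> a F \<in> gates \<S> a F"
  unfolding gate_def using assms by (metis is_singletonI' is_singleton_the_elem singletonI)

lemma gates_nonempty:
  assumes "compact_space X" and subbase: "closed_subbase X \<S>" and binary: "binary_family \<S>"
    and F: "closedin X F" "F \<noteq> {}" "S_convex X \<S> F"
  shows "gates \<S> a F \<noteq> {}"
proof -
  define \<U> where "\<U> = insert F {S \<in> \<S>. a \<in> S \<and> S \<inter> F \<noteq> {}}"
  have "\<forall>C\<in>\<U>. closedin X C"
    unfolding \<U>_def using F(1) closedin_closed_subbase[OF subbase] by blast
  moreover have "\<Inter>\<V> \<noteq> {}" if "finite \<V>" "\<V> \<subseteq> \<U>" for \<V>
  proof -
    have "F \<inter> \<Inter>(\<V> - {F}) \<noteq> {}"
      by (rule S_convex_Int_Inter_linked_nonempty[OF binary closed_subbase_subset[OF subbase] F(2,3)])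
        (use that in \<open>auto simp: \<U>_def linked_def\<close>)
    then show ?thesis
      by blast
  qed
  ultimately have "\<Inter>\<U> \<noteq> {}"
    using compact_space_fip[THEN iffD1, OF \<open>compact_space X\<close>, rule_format, of \<U>] by blast
  then show ?thesis
    unfolding gates_def \<U>_def by blast
qed

lemma gates_subsingleton:
  assumes subbase: "closed_subbase X \<S>" and binary: "binary_family \<S>"
    and normal: "normal_family X \<S>" and t1: "t1_space X"
    and a: "a \<in> topspace X" and F: "F \<subseteq> topspace X"
    and p: "p \<in> gates \<S> a F" and q: "q \<in> gates \<S> a F"
  shows "p = q"
proof (rule ccontr)
  assume "p \<noteq> q"
  have pq: "p \<in> F" "q \<in> F" "p \<in> topspace X" "q \<in> topspace X"
    using p q F unfolding gates_def by auto
  obtain T where T: "T \<in> \<S>" "q \<in> T" "p \<notin> T"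
    using closed_subbase_separates_points[OF subbase t1 pq(3,4) \<open>p \<noteq> q\<close>] by blast
  then obtain T0 T1 where T01: "T0 \<in> \<S>" "T1 \<in> \<S>" "p \<notin> T1" "T0 \<inter> T = {}"
      "T0 \<union> T1 = topspace X"
    using binary_normal_closed_subbase_screen[OF subbase binary normal t1 pq(3) T(1,3)] by blast
  have "a \<in> T0 \<union> T1" "p \<in> T0 \<union> T1" "q \<in> T0 \<union> T1"
    using a pq(3,4) T01(5) by simp_all
  then consider "a \<in> T0" "p \<in> T0" | "a \<in> T1" "q \<in> T1"
    using T(2) T01(3,4) by blast
  then show False
  proof cases
    case 1
    then have "q \<in> T0"
      using q pq(1) T01(1) unfolding gates_def by blast
    then show False
      using T(2) T01(4) by blast
  next
    case 2
    then have "p \<in> T1"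
      using p pq(2) T01(2) unfolding gates_def by blast
    then show False
      using T01(3) by blast
  qed
qed

context
  fixes X :: "'a topology" and Y :: "'b topology" and \<S> :: "'a set set"
    and f :: "'a \<Rightarrow> 'b" and a :: 'a
  assumes subbase: "closed_subbase X \<S>" and binary: "binary_family \<S>"
    and normal: "normal_family X \<S>" and t1: "t1_space X" and Hausdorff: "Hausdorff_space Y"
    and f: "continuous_map X Y f" "f ` topspace X = topspace Y"
    and f_convex: "S_convex_map X \<S> Y f" and f_open: "S_open_map X \<S> Y f"
    and a: "a \<in> topspace X"
begin

abbreviation fibre :: "'b \<Rightarrow> 'a set" where
  "fibre y \<equiv> {x \<in> topspace X. f x = y}"

abbreviation gate_section :: "'b \<Rightarrow> 'a" where
  "gate_section y \<equiv> gate \<S> a (fibre y)"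

lemma gate_section_in_gates:
  assumes y: "y \<in> topspace Y"
  shows "gate_section y \<in> gates \<S> a (fibre y)"
proof (rule gate_in_gates)
  have "closedin X (fibre y)"
    using closedin_continuous_map_preimage[OF f(1), of "{y}"] y
      t1_space_closedin_singleton[THEN iffD1, OF Hausdorff_imp_t1_space[OF Hausdorff]] by simp
  moreover have "fibre y \<noteq> {}"
    using y f(2) by (metis (mono_tags, lifting) empty_Collect_eq imageE)
  moreover have "S_convex X \<S> (fibre y)"
    using f_convex y unfolding S_convex_map_def by blast
  ultimately show "gates \<S> a (fibre y) \<noteq> {}"
    by (rule gates_nonempty[OF compact_space_binary_closed_subbase[OF subbase binary] subbase binary])
next
  fix p q assume "p \<in> gates \<S> a (fibre y)" "q \<in> gates \<S> a (fibre y)"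
  then show "p = q"
    by (rule gates_subsingleton[OF subbase binary normal t1 a, rotated]) auto
qed

lemma gate_section_in_fibre:
  assumes "y \<in> topspace Y"
  shows "gate_section y \<in> topspace X" "f (gate_section y) = y"
  using gate_section_in_gates[OF assms] unfolding gates_def by blast+

lemma gate_section_in_member:
  assumes "y \<in> topspace Y" "S \<in> \<S>" "a \<in> S" "S \<inter> fibre y \<noteq> {}"
  shows "gate_section y \<in> S"
  using gate_section_in_gates[OF assms(1)] assms(2-4) unfolding gates_def by blast

lemma gate_section_avoids_locally:
  assumes y: "y \<in> topspace Y" and S: "S \<in> \<S>" "gate_section y \<notin> S" "S \<noteq> {}"
  shows "\<exists>W. openin Y W \<and> y \<in> W \<and> (\<forall>y'\<in>W. gate_section y' \<notin> S)"
proof -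
  obtain T0 T1 where T01: "T0 \<in> \<S>" "T1 \<in> \<S>" "gate_section y \<notin> T1" "T0 \<inter> S = {}"
      "T0 \<union> T1 = topspace X"
    using binary_normal_closed_subbase_screen[OF subbase binary normal t1
        gate_section_in_fibre(1)[OF y] S] by blast
  have "a \<in> T0 \<union> T1"
    using a T01(5) by simp
  then show ?thesis
  proof
    assume "a \<in> T0"
    let ?W = "f ` (topspace X - T1)"
    have "openin Y ?W"
      using f_open T01(2) unfolding S_open_map_def by (rule bspec)
    moreover have "y \<in> ?W"
    proof -
      have "gate_section y \<in> topspace X - T1"
        using gate_section_in_fibre(1)[OF y] T01(3) by blast
      then have "f (gate_section y) \<in> ?W"
        by (rule imageI)
      then show ?thesis
        using gate_section_in_fibre(2)[OF y] by simp
    qed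
    moreover have "gate_section y' \<in> T0" if "y' \<in> ?W" for y'
    proof -
      obtain x where x: "x \<in> topspace X" "x \<notin> T1" "f x = y'"
        using \<open>y' \<in> ?W\<close> by blast
      have "x \<in> T0 \<union> T1"
        using x(1) T01(5) by simp
      then have "T0 \<inter> fibre y' \<noteq> {}"
        using x by blast
      moreover have "y' \<in> topspace Y"
        using x(1,3) f(2) by blast
      ultimately show ?thesis
        using gate_section_in_member T01(1) \<open>a \<in> T0\<close> by blast
    qed
    ultimately show ?thesis
      using T01(4) by blast
  next
    assume "a \<in> T1"
    have "T1 \<inter> fibre y = {}"
      using gate_section_in_member[OF y T01(2) \<open>a \<in> T1\<close>] T01(3) by blast
    let ?W = "topspace Y - f ` T1"
    have "closed_map X Y f"
      using continuous_imp_closed_map_gen compact_space_binary_closed_subbase[OF subbase binary]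
        Hausdorff_imp_kc_space[OF Hausdorff] f(1) by blast
    then have "closedin Y (f ` T1)"
      using closedin_closed_subbase[OF subbase T01(2)] unfolding closed_map_def by blast
    then have "openin Y ?W"
      by (rule openin_diff[OF openin_topspace])
    moreover have "y \<in> ?W"
    proof -
      have "y \<notin> f ` T1"
      proof
        assume "y \<in> f ` T1"
        then obtain x where "x \<in> T1" "f x = y"
          by blast
        then have "x \<in> T1 \<inter> fibre y"
          using closed_subbase_subset[OF subbase T01(2)] by blast
        then show False
          using \<open>T1 \<inter> fibre y = {}\<close> by blast
      qed
      then show ?thesis
        using y by blast
    qed
    moreover have "gate_section y' \<notin> T1" if "y' \<in> ?W" for y'
    proof
      assume "gate_section y' \<in> T1"
      then have "f (gate_section y') \<in> f ` T1"
        by (rule imageI)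
      then show False
        using that gate_section_in_fibre(2)[of y'] by auto
    qed
    moreover have "S \<subseteq> T1"
    proof -
      have "S \<subseteq> T0 \<union> T1"
        using closed_subbase_subset[OF subbase S(1)] T01(5) by simp
      then show ?thesis
        using T01(4) by blast
    qed
    ultimately show ?thesis
      by blast
  qed
qed

lemma continuous_map_gate_section: "continuous_map Y X gate_section"
proof (rule continuous_map_closed_subbase[OF subbase])
  show "gate_section \<in> topspace Y \<rightarrow> topspace X"
    using gate_section_in_fibre(1) by blast
next
  fix S assume "S \<in> \<S>"
  let ?C = "{y \<in> topspace Y. gate_section y \<in> S}"
  have "openin Y (topspace Y - ?C)"
  proof (subst openin_subopen, intro ballI)
    fix y assume y: "y \<in> topspace Y - ?C"
    show "\<exists>W. openin Y W \<and> y \<in> W \<and> W \<subseteq> topspace Y - ?C"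
    proof (cases "S = {}")
      case True
      then show ?thesis
        using y by (intro exI[of _ "topspace Y"]) auto
    next
      case False
      then obtain W where W: "openin Y W" "y \<in> W" "\<forall>y'\<in>W. gate_section y' \<notin> S"
        using gate_section_avoids_locally[of y S] y \<open>S \<in> \<S>\<close> by blast
      then show ?thesis
        using openin_subset[OF W(1)] by blast
    qed
  qed
  then show "closedin Y ?C"
    unfolding closedin_def by blast
qed

end
theorem corollary1p3:
  fixes X :: "'a topology" and Y :: "'b topology" and \<S> :: "'a set set"
    and f :: "'a \<Rightarrow> 'b"
  assumes "Tychonoff_space X" and "Tychonoff_space Y"
    and "closed_subbase X \<S>" and "binary_family \<S>" and "normal_family X \<S>"
    and "continuous_map X Y f" and "f ` topspace X = topspace Y"
    and "S_convex_map X \<S> Y f" and "S_open_map X \<S> Y f"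
  shows "\<forall>(Z :: 'c topology) (g :: 'c \<Rightarrow> 'b).
           Tychonoff_space Z \<and> continuous_map Z Y g \<longrightarrow>
           (\<exists>h. continuous_map Z X h \<and> (\<forall>z\<in>topspace Z. f (h z) = g z))"
proof (intro allI impI, elim conjE)
  fix Z :: "'c topology" and g :: "'c \<Rightarrow> 'b"
  assume g: "continuous_map Z Y g"
  show "\<exists>h. continuous_map Z X h \<and> (\<forall>z\<in>topspace Z. f (h z) = g z)"
  proof (cases "topspace X = {}")
    case True
    then have "topspace Z = {}"
      using g assms(7) continuous_map_image_subset_topspace by fastforce
    then show ?thesis
      unfolding continuous_map_def by simp
  next
    case False
    then obtain a where a: "a \<in> topspace X"
      by blast
    have separation: "t1_space X" "Hausdorff_space Y"
      using assms(1,2) completely_regular_imp_regular_space regular_t1_imp_Hausdorff_space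
      unfolding Tychonoff_space_def by blast+
    let ?s = "\<lambda>y. gate \<S> a {x \<in> topspace X. f x = y}"
    have "continuous_map Y X ?s"
      using continuous_map_gate_section[OF assms(3-5) separation assms(6-9) a] .
    have lifts: "f (?s y) = y" if "y \<in> topspace Y" for y
      using gate_section_in_fibre(2)[OF assms(3-5) separation assms(6-9) a that] .
    show ?thesis
    proof (intro exI conjI ballI)
      show "continuous_map Z X (?s \<circ> g)"
        by (rule continuous_map_compose[OF g \<open>continuous_map Y X ?s\<close>])
      show "f ((?s \<circ> g) z) = g z" if "z \<in> topspace Z" for z
        using lifts g that continuous_map_image_subset_topspace by fastforce
    qed
  qed
qed

end
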